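(* Let $0\le t_1<t_2<+\infty$, $r:=\frac{t_2-t_1}2$, $x_0:=\frac{t_1+t_2}2$. For all $z$ with $\operatorname{Im}z\ge0$: $\omega(z,[t_1,t_2])\le1$ if $z\in D(x_0,r)\cup\{t_1,t_2\}$; $\omega(z,[t_1,t_2])\le\frac12$ if $\operatorname{Im}z>0$ and $|z-x_0|=r$; and $\omega(z,[t_1,t_2])\le\frac1\pi\arctan\frac{2r|z-x_0|}{|z-x_0|^2-r^2}$ if $|z-x_0|>r$. These bounds are sharp on each semicircle: for every $t\ge0$ there is a point $z$ with $\operatorname{Im}z\ge0$, $|z-x_0|=t$, at which equality holds in the applicable bound. Moreover, for all $z$ with $\operatorname{Im}z>0$ and $|z-x_0|<r$, $$\omega(z,[t_1,t_2])\ge1-\frac1\pi\arctan\frac{2r|z-x_0|}{r^2-|z-x_0|^2}\ge1-\frac1\pi\frac{2r|z-x_0|}{r^2-|z-x_0|^2}.$$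
   Context: For $z$ with $\operatorname{Im}z>0$ and Borel $B\subset\mathbb{R}$, $\omega(z,B)=\frac1\pi\int_B\frac{\operatorname{Im}z}{(t-\operatorname{Re}z)^2+(\operatorname{Im}z)^2}dt$ is the harmonic measure of the upper half-plane; for $x\in\mathbb{R}$, $\omega(x,B)$ is the Dirac measure $\delta_x(B)$. $D(x_0,r)$ is the open disc of centre $x_0$ and radius $r$. *)

theory Defs
  imports "HOL-Analysis.Analysis"
begin

text \<open>Harmonic measure of the upper half-plane: for Im z > 0 the Poisson integral
  over B (Lebesgue integral); for real z the Dirac measure at z.
  (Points with Im z < 0 are never used.)\<close>
definition hmeasure :: "complex \<Rightarrow> real set \<Rightarrow> real" where
  "hmeasure z B =
     (if Im z > 0
      then (1 / pi) * (LINT t:B|lborel. Im z / ((t - Re z)\<^sup>2 + (Im z)\<^sup>2))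
      else indicator B (Re z))"

definition hm_bound :: "real \<Rightarrow> real \<Rightarrow> complex \<Rightarrow> real" where
  "hm_bound t1 t2 z =
     (let r = (t2 - t1) / 2; x0 = (t1 + t2) / 2; d = cmod (z - complex_of_real x0) in
      if z \<in> ball (complex_of_real x0) r \<union> {complex_of_real t1, complex_of_real t2} then 1
      else if Im z > 0 \<and> d = r then 1 / 2
      else (1 / pi) * arctan (2 * r * d / (d\<^sup>2 - r\<^sup>2)))"

end

theory Submission
  imports Defs
begin

text \<open>For \<open>Im z > 0\<close> the harmonic measure of \<open>[x0 - r, x0 + r]\<close> is \<open>1/\<pi>\<close> times the angle
  under which the interval is seen from \<open>z\<close>, and this angle is the arccotangent of
  \<open>(|z - x0|\<^sup>2 - r\<^sup>2) / (2 r Im z)\<close>. So the measure is \<open>1/2\<close> on the semicircle over the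
  interval and is an explicit arctangent inside and outside it; replacing \<open>Im z\<close> by the larger
  \<open>|z - x0|\<close> gives the bounds, which are attained on the vertical line through \<open>x0\<close>
  outside the disc and on the real axis inside the closed disc.\<close>

lemma hmeasure_interval_arctan:
  fixes t1 t2 :: real
  assumes "t1 \<le> t2" and "Im z > 0"
  shows "hmeasure z {t1..t2} = (arctan ((t2 - Re z) / Im z) - arctan ((t1 - Re z) / Im z)) / pi"
proof -
  define x y where "x = Re z" and "y = Im z"
  have y: "y > 0" using assms(2) by (simp add: y_def)
  have "(\<integral>t. y / ((t - x)\<^sup>2 + y\<^sup>2) * indicator {t1..t2} t \<partial>lborel)
      = arctan ((t2 - x) / y) - arctan ((t1 - x) / y)"
  proof (rule integral_FTC_Icc_real[OF assms(1)])
    fix t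
    have "((\<lambda>t. arctan ((t - x) / y)) has_real_derivative inverse (1 + ((t - x) / y)\<^sup>2) * (1 / y)) (at t)"
      using y by (auto intro!: derivative_eq_intros)
    moreover have "inverse (1 + ((t - x) / y)\<^sup>2) * (1 / y) = y / ((t - x)\<^sup>2 + y\<^sup>2)"
      using y by (simp add: field_simps power2_eq_square)
    ultimately show "((\<lambda>t. arctan ((t - x) / y)) has_real_derivative y / ((t - x)\<^sup>2 + y\<^sup>2)) (at t)"
      by simp
    have "(t - x)\<^sup>2 + y\<^sup>2 \<noteq> 0" using y by (simp add: add_nonneg_pos)
    then show "isCont (\<lambda>t. y / ((t - x)\<^sup>2 + y\<^sup>2)) t"
      by (intro continuous_intros) auto
  qed
  then show ?thesis
    using assms(2) unfolding hmeasure_def set_lebesgue_integral_def x_def y_def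
    by (simp add: mult.commute)
qed

lemma hmeasure_interval_le_one:
  fixes t1 t2 :: real
  assumes "t1 \<le> t2" and "Im z \<ge> 0"
  shows "hmeasure z {t1..t2} \<le> 1"
proof (cases "Im z > 0")
  case True
  then show ?thesis
    using hmeasure_interval_arctan[OF assms(1) True]
      arctan_bounded[of "(t2 - Re z) / Im z"] arctan_bounded[of "(t1 - Re z) / Im z"]
    by simp
next
  case False
  then show ?thesis by (simp add: hmeasure_def indicator_def)
qed

text \<open>The difference of two arctangents is an arccotangent; unlike the usual
  arctangent addition formula this holds without any case distinction.\<close>
lemma arctan_diff_eq_arccot:
  fixes a b :: real
  assumes "b < a"
  shows "arctan a - arctan b = pi / 2 - arctan ((1 + a * b) / (a - b))"
proof -
  define \<theta> where "\<theta> = arctan a - arctan b"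
  have "0 < \<theta>" using assms by (simp add: \<theta>_def arctan_less_iff)
  moreover have "\<theta> < pi"
    using arctan_bounded[of a] arctan_bounded[of b] by (simp add: \<theta>_def)
  moreover have "tan (pi / 2 - \<theta>) = (1 + a * b) / (a - b)"
  proof -
    define ca cb where "ca = cos (arctan a)" and "cb = cos (arctan b)"
    have "ca > 0" "cb > 0" by (simp_all add: ca_def cb_def cos_arctan add_pos_nonneg)
    have sin_ab: "sin (arctan a) = a * ca" "sin (arctan b) = b * cb"
      by (simp_all add: ca_def cb_def cos_arctan sin_arctan)
    have "sin \<theta> = ca * cb * (a - b)" "cos \<theta> = ca * cb * (1 + a * b)"
      unfolding \<theta>_def sin_diff cos_diff sin_ab ca_def[symmetric] cb_def[symmetric]
      by (simp_all add: algebra_simps)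
    with \<open>ca > 0\<close> \<open>cb > 0\<close> show ?thesis by (simp add: tan_cot' cot_def)
  qed
  ultimately have "arctan ((1 + a * b) / (a - b)) = pi / 2 - \<theta>"
    using arctan_tan[of "pi / 2 - \<theta>"] by simp
  then show ?thesis by (simp add: \<theta>_def)
qed

lemma hmeasure_centred_interval:
  fixes x0 r :: real
  assumes "r > 0" and "Im z > 0"
  shows "hmeasure z {x0 - r..x0 + r}
           = 1 / 2 - arctan (((cmod (z - of_real x0))\<^sup>2 - r\<^sup>2) / (2 * r * Im z)) / pi"
proof -
  define x y where "x = Re z" and "y = Im z"
  define a b where "a = (x0 + r - x) / y" and "b = (x0 - r - x) / y"
  have y: "y > 0" using assms(2) by (simp add: y_def)
  have "b < a" using y assms(1) by (simp add: a_def b_def divide_strict_right_mono)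
  have ratio: "(1 + a * b) / (a - b) = ((cmod (z - of_real x0))\<^sup>2 - r\<^sup>2) / (2 * r * y)"
  proof -
    have "(1 + a * b) / (a - b) = ((x - x0)\<^sup>2 + y\<^sup>2 - r\<^sup>2) / (2 * r * y)"
      using y assms(1) by (simp add: a_def b_def field_simps power2_eq_square)
    also have "(x - x0)\<^sup>2 + y\<^sup>2 = (cmod (z - of_real x0))\<^sup>2"
      by (simp add: cmod_power2 x_def y_def)
    finally show ?thesis .
  qed
  have "hmeasure z {x0 - r..x0 + r} = (arctan a - arctan b) / pi"
    using hmeasure_interval_arctan[of "x0 - r" "x0 + r" z] assms
    by (simp add: a_def b_def x_def y_def algebra_simps)
  also have "\<dots> = (pi / 2 - arctan ((1 + a * b) / (a - b))) / pi"
    by (simp only: arctan_diff_eq_arccot[OF \<open>b < a\<close>])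
  finally show ?thesis
    by (simp add: ratio y_def diff_divide_distrib)
qed

lemma hmeasure_centred_interval_on_circle:
  fixes x0 r :: real
  assumes "r > 0" and "Im z > 0" and "cmod (z - of_real x0) = r"
  shows "hmeasure z {x0 - r..x0 + r} = 1 / 2"
  using hmeasure_centred_interval[OF assms(1,2)] assms(3) by simp

lemma hmeasure_centred_interval_outside:
  fixes x0 r :: real
  assumes "r > 0" and "Im z > 0" and "cmod (z - of_real x0) > r"
  shows "hmeasure z {x0 - r..x0 + r}
           = (1 / pi) * arctan (2 * r * Im z / ((cmod (z - of_real x0))\<^sup>2 - r\<^sup>2))"
proof -
  define u where "u = ((cmod (z - of_real x0))\<^sup>2 - r\<^sup>2) / (2 * r * Im z)"
  have "u > 0"
    using assms by (simp add: u_def power_strict_mono)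
  have "hmeasure z {x0 - r..x0 + r} = 1 / 2 - arctan u / pi"
    using hmeasure_centred_interval[OF assms(1,2)] by (simp add: u_def)
  also have "\<dots> = arctan (inverse u) / pi"
    using arctan_inverse[OF \<open>u > 0\<close>] by (simp add: diff_divide_distrib)
  finally show ?thesis by (simp add: u_def)
qed

lemma hmeasure_centred_interval_inside:
  fixes x0 r :: real
  assumes "r > 0" and "Im z > 0" and "cmod (z - of_real x0) < r"
  shows "hmeasure z {x0 - r..x0 + r}
           = 1 - (1 / pi) * arctan (2 * r * Im z / (r\<^sup>2 - (cmod (z - of_real x0))\<^sup>2))"
proof -
  define u where "u = (r\<^sup>2 - (cmod (z - of_real x0))\<^sup>2) / (2 * r * Im z)"
  have "u > 0"
    using assms by (simp add: u_def power_strict_mono)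
  have "hmeasure z {x0 - r..x0 + r} = 1 / 2 - arctan (- u) / pi"
    using hmeasure_centred_interval[OF assms(1,2)] by (simp add: u_def minus_divide_left)
  also have "\<dots> = 1 - arctan (inverse u) / pi"
    using arctan_inverse[OF \<open>u > 0\<close>] by (simp add: arctan_minus diff_divide_distrib)
  finally show ?thesis by (simp add: u_def)
qed

lemma hmeasure_centred_interval_outside_le:
  fixes x0 r :: real
  assumes "r > 0" and "Im z \<ge> 0" and "cmod (z - of_real x0) > r"
  shows "hmeasure z {x0 - r..x0 + r}
           \<le> (1 / pi) * arctan (2 * r * cmod (z - of_real x0) / ((cmod (z - of_real x0))\<^sup>2 - r\<^sup>2))"
proof (cases "Im z > 0")
  case True
  have "Im z \<le> cmod (z - of_real x0)"
    using abs_Im_le_cmod[of "z - of_real x0"] by simp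
  moreover have "(cmod (z - of_real x0))\<^sup>2 - r\<^sup>2 > 0"
    using assms by (simp add: power_strict_mono)
  ultimately have "2 * r * Im z / ((cmod (z - of_real x0))\<^sup>2 - r\<^sup>2)
                     \<le> 2 * r * cmod (z - of_real x0) / ((cmod (z - of_real x0))\<^sup>2 - r\<^sup>2)"
    using assms(1,3) by (intro divide_right_mono mult_left_mono) auto
  then show ?thesis
    using hmeasure_centred_interval_outside[OF assms(1) True assms(3)]
    by (simp add: arctan_le_iff divide_right_mono)
next
  case False
  then have "cmod (z - of_real x0) = \<bar>Re z - x0\<bar>"
    using assms(2) by (simp add: cmod_def)
  then have "Re z \<notin> {x0 - r..x0 + r}"
    using assms(3) by auto
  then have "hmeasure z {x0 - r..x0 + r} = 0"
    using False by (simp add: hmeasure_def)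
  moreover have "(cmod (z - of_real x0))\<^sup>2 - r\<^sup>2 > 0"
    using assms by (simp add: power_strict_mono)
  ultimately show ?thesis
    using \<open>r > 0\<close> by (simp add: zero_le_arctan_iff divide_nonneg_pos)
qed

lemma hmeasure_centred_interval_inside_ge:
  fixes x0 r :: real
  assumes "r > 0" and "Im z > 0" and "cmod (z - of_real x0) < r"
  shows "1 - (1 / pi) * arctan (2 * r * cmod (z - of_real x0) / (r\<^sup>2 - (cmod (z - of_real x0))\<^sup>2))
           \<le> hmeasure z {x0 - r..x0 + r}"
proof -
  have "Im z \<le> cmod (z - of_real x0)"
    using abs_Im_le_cmod[of "z - of_real x0"] by simp
  moreover have "r\<^sup>2 - (cmod (z - of_real x0))\<^sup>2 > 0"
    using assms by (simp add: power_strict_mono)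
  ultimately have "2 * r * Im z / (r\<^sup>2 - (cmod (z - of_real x0))\<^sup>2)
                     \<le> 2 * r * cmod (z - of_real x0) / (r\<^sup>2 - (cmod (z - of_real x0))\<^sup>2)"
    using assms(1,3) by (intro divide_right_mono mult_left_mono) auto
  then show ?thesis
    using hmeasure_centred_interval_inside[OF assms]
    by (simp add: arctan_le_iff divide_right_mono)
qed

lemma hm_bound_attained:
  fixes t1 t2 t :: real
  assumes "t1 < t2" and "t \<ge> 0"
  shows "\<exists>z. Im z \<ge> 0 \<and> cmod (z - of_real ((t1 + t2) / 2)) = t \<and> hmeasure z {t1..t2} = hm_bound t1 t2 z"
proof -
  define r x0 where "r = (t2 - t1) / 2" and "x0 = (t1 + t2) / 2"
  have "r > 0" and interval: "{t1..t2} = {x0 - r..x0 + r}"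
    using assms(1) by (simp_all add: r_def x0_def field_simps)
  show ?thesis
  proof (cases "t \<le> r")
    case True
    define z where "z = complex_of_real (x0 + t)"
    have "z \<in> ball (of_real x0) r \<union> {of_real t1, of_real t2}"
    proof (cases "t = r")
      case True
      moreover have "x0 + r = t2" by (simp add: r_def x0_def field_simps)
      ultimately show ?thesis by (simp add: z_def)
    next
      case False
      then show ?thesis using \<open>t \<le> r\<close> assms(2) by (simp add: z_def dist_norm)
    qed
    then have "hm_bound t1 t2 z = 1"
      by (simp add: hm_bound_def r_def x0_def)
    moreover have "hmeasure z {t1..t2} = 1"
      using True assms(2) by (simp add: z_def hmeasure_def interval)
    ultimately show ?thesis
      using assms(2) by (intro exI[of _ z]) (simp add: z_def x0_def)
  next
    case False
    define z where "z = complex_of_real x0 + \<i> * complex_of_real t"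
    have z: "Im z = t" "cmod (z - of_real x0) = t"
      using assms(2) by (simp_all add: z_def norm_mult)
    then have "z \<notin> ball (of_real x0) r \<union> {of_real t1, of_real t2}"
      using False \<open>r > 0\<close> by (auto simp: dist_norm norm_minus_commute)
    then have "hm_bound t1 t2 z = (1 / pi) * arctan (2 * r * t / (t\<^sup>2 - r\<^sup>2))"
      using z False by (simp add: hm_bound_def Let_def r_def x0_def)
    moreover have "hmeasure z {t1..t2} = (1 / pi) * arctan (2 * r * t / (t\<^sup>2 - r\<^sup>2))"
      using hmeasure_centred_interval_outside[OF \<open>r > 0\<close>] z False \<open>r > 0\<close> by (simp add: interval)
    ultimately show ?thesis
      using z assms(2) by (intro exI[of _ z]) (simp add: x0_def)
  qed
qed

theorem proposition9:
  fixes t1 t2 r x0 :: real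
  assumes "0 \<le> t1" and "t1 < t2"
    and r_def: "r = (t2 - t1) / 2" and x0_def: "x0 = (t1 + t2) / 2"
  shows
    "(\<forall>z. Im z \<ge> 0 \<and> z \<in> ball (complex_of_real x0) r \<union> {complex_of_real t1, complex_of_real t2}
          \<longrightarrow> hmeasure z {t1..t2} \<le> 1)
   \<and> (\<forall>z. Im z > 0 \<and> cmod (z - complex_of_real x0) = r \<longrightarrow> hmeasure z {t1..t2} \<le> 1 / 2)
   \<and> (\<forall>z. Im z \<ge> 0 \<and> cmod (z - complex_of_real x0) > r \<longrightarrow>
          hmeasure z {t1..t2} \<le> (1 / pi) * arctan (2 * r * cmod (z - complex_of_real x0)
                                   / ((cmod (z - complex_of_real x0))\<^sup>2 - r\<^sup>2)))
   \<and> (\<forall>t \<ge> 0. \<exists>z. Im z \<ge> 0 \<and> cmod (z - complex_of_real x0) = t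
          \<and> hmeasure z {t1..t2} = hm_bound t1 t2 z)
   \<and> (\<forall>z. Im z > 0 \<and> cmod (z - complex_of_real x0) < r \<longrightarrow>
          1 - (1 / pi) * arctan (2 * r * cmod (z - complex_of_real x0)
                 / (r\<^sup>2 - (cmod (z - complex_of_real x0))\<^sup>2)) \<le> hmeasure z {t1..t2}
        \<and> 1 - (1 / pi) * (2 * r * cmod (z - complex_of_real x0)
                 / (r\<^sup>2 - (cmod (z - complex_of_real x0))\<^sup>2))
            \<le> 1 - (1 / pi) * arctan (2 * r * cmod (z - complex_of_real x0)
                 / (r\<^sup>2 - (cmod (z - complex_of_real x0))\<^sup>2)))"
proof (intro conjI allI impI)
  have "r > 0" and interval: "{t1..t2} = {x0 - r..x0 + r}"
    using assms(2) by (simp_all add: r_def x0_def field_simps)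
  fix z
  show "hmeasure z {t1..t2} \<le> 1" if "Im z \<ge> 0 \<and> z \<in> ball (of_real x0) r \<union> {of_real t1, of_real t2}"
    using hmeasure_interval_le_one assms(2) that by simp
  show "hmeasure z {t1..t2} \<le> 1 / 2" if "Im z > 0 \<and> cmod (z - of_real x0) = r"
    using hmeasure_centred_interval_on_circle[OF \<open>r > 0\<close>] that by (simp add: interval)
  show "hmeasure z {t1..t2} \<le> (1 / pi) * arctan (2 * r * cmod (z - of_real x0)
                                   / ((cmod (z - of_real x0))\<^sup>2 - r\<^sup>2))"
    if "Im z \<ge> 0 \<and> cmod (z - of_real x0) > r"
    using hmeasure_centred_interval_outside_le[OF \<open>r > 0\<close>] that by (simp add: interval)
  show "\<exists>z. Im z \<ge> 0 \<and> cmod (z - of_real x0) = t \<and> hmeasure z {t1..t2} = hm_bound t1 t2 z"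
    if "t \<ge> 0" for t
    using hm_bound_attained[OF assms(2) that] by (simp add: x0_def)
  assume inside: "Im z > 0 \<and> cmod (z - of_real x0) < r"
  then show "1 - (1 / pi) * arctan (2 * r * cmod (z - of_real x0) / (r\<^sup>2 - (cmod (z - of_real x0))\<^sup>2))
               \<le> hmeasure z {t1..t2}"
    using hmeasure_centred_interval_inside_ge[OF \<open>r > 0\<close>] by (simp add: interval)
  have arctan_bound: "1 - (1 / pi) * x \<le> 1 - (1 / pi) * arctan x" if "x \<ge> 0" for x :: real
    using arctan_le_self[OF that] by (simp add: divide_right_mono)
  have "r\<^sup>2 - (cmod (z - of_real x0))\<^sup>2 > 0"
    using inside by (simp add: power_strict_mono)
  then show "1 - (1 / pi) * (2 * r * cmod (z - of_real x0) / (r\<^sup>2 - (cmod (z - of_real x0))\<^sup>2))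
               \<le> 1 - (1 / pi) * arctan (2 * r * cmod (z - of_real x0) / (r\<^sup>2 - (cmod (z - of_real x0))\<^sup>2))"
    using \<open>r > 0\<close> by (intro arctan_bound divide_nonneg_pos) auto
qed

end
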